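(* Let $X$ be a normed space, $U\subseteq X$ open nonempty, $Y$ a Banach space and $k\in\overline{\mathbb{N}}$. Let $\mathcal{W}\subseteq\overline{\mathbb{R}}^U$ be such that for each compact $K\subseteq U$ there exists $f_K\in\mathcal{W}$ with $\inf_{x\in K}|f_K(x)|>0$. Then $C^k_{\mathcal{W}}(U,Y)$ is complete.
   Context: $C^k_{\mathcal W}(U,Y)$: $k$ times continuously Fréchet differentiable $\gamma:U\to Y$ with $\|\gamma\|_{f,j}:=\sup_{x\in U}|f(x)|\,\|D^{(j)}\gamma(x)\|_{op}<\infty$ for all $f\in\mathcal W$, $j\in\mathbb N$, $j\le k$ ($\infty\cdot0=0$), with the locally convex topology generated by these seminorms. $\overline{\mathbb{R}}=\mathbb{R}\cup\{\pm\infty\}$, $\overline{\mathbb N}=\mathbb N\cup\{\infty\}$. *)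

theory Defs
  imports "HOL-Analysis.Analysis" "HOL-Library.Extended_Nat" "HOL-Library.Extended_Real"
begin

text \<open>Multilinear maps X^j \<rightarrow> Y are represented as functions (nat \<Rightarrow> 'a) \<Rightarrow> 'b
  that depend only on the first j arguments. The j-th Frechet derivative
  D^(j) g x is encoded as such a map: D^(j+1) g x (h, v_1, ..., v_j) = (D(D^(j) g)(x) h)(v_1,...,v_j).\<close>

primrec hderiv :: "nat \<Rightarrow> ('a::real_normed_vector \<Rightarrow> 'b::real_normed_vector) \<Rightarrow> 'a \<Rightarrow> (nat \<Rightarrow> 'a) \<Rightarrow> 'b" where
  "hderiv 0 g x v = g x"
| "hderiv (Suc j) g x v = frechet_derivative (\<lambda>y. hderiv j g y (\<lambda>i. v (Suc i))) (at x) (v 0)"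

definition mopnorm :: "nat \<Rightarrow> ((nat \<Rightarrow> 'a::real_normed_vector) \<Rightarrow> 'b::real_normed_vector) \<Rightarrow> real" where
  "mopnorm j A = Sup ((\<lambda>v. norm (A v)) ` {v. \<forall>i<j. norm (v i) \<le> 1})"

definition bounded_multilinear :: "nat \<Rightarrow> ((nat \<Rightarrow> 'a::real_normed_vector) \<Rightarrow> 'b::real_normed_vector) \<Rightarrow> bool" where
  "bounded_multilinear j A \<longleftrightarrow>
     (\<forall>v w. (\<forall>i<j. v i = w i) \<longrightarrow> A v = A w) \<and>
     (\<forall>i<j. \<forall>v. linear (\<lambda>h. A (v(i := h)))) \<and>
     bdd_above ((\<lambda>v. norm (A v)) ` {v. \<forall>i<j. norm (v i) \<le> 1})"

definition Ck :: "enat \<Rightarrow> 'a::real_normed_vector set \<Rightarrow> ('a \<Rightarrow> 'b::real_normed_vector) \<Rightarrow> bool" where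
  "Ck k U g \<longleftrightarrow>
     (\<forall>j x. enat j \<le> k \<and> x \<in> U \<longrightarrow>
        bounded_multilinear j (hderiv j g x) \<and>
        ((\<lambda>y. mopnorm j (\<lambda>v. hderiv j g y v - hderiv j g x v)) \<longlongrightarrow> 0) (at x)) \<and>
     (\<forall>j x. enat (Suc j) \<le> k \<and> x \<in> U \<longrightarrow>
        ((\<lambda>y. mopnorm j (\<lambda>v. hderiv j g y v - hderiv j g x v
                               - hderiv (Suc j) g x (case_nat (y - x) v)) / norm (y - x))
           \<longlongrightarrow> 0) (at x))"

text \<open>The weighted seminorm ||g||_{f,j} = sup_{x\<in>U} |f x| * ||D^(j) g(x)||_op, in ereal
  (with \<infinity> * 0 = 0, as in Isabelle's ereal).\<close>
definition wseminorm :: "'a::real_normed_vector set \<Rightarrow> ('a \<Rightarrow> ereal) \<Rightarrow> nat \<Rightarrow> ('a \<Rightarrow> 'b::real_normed_vector) \<Rightarrow> ereal" where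
  "wseminorm U f j g = (SUP x\<in>U. \<bar>f x\<bar> * ereal (mopnorm j (hderiv j g x)))"

definition CkW :: "enat \<Rightarrow> 'a::real_normed_vector set \<Rightarrow> ('a \<Rightarrow> ereal) set \<Rightarrow> ('a \<Rightarrow> 'b::real_normed_vector) set" where
  "CkW k U W = {g. Ck k U g \<and> (\<forall>f\<in>W. \<forall>j. enat j \<le> k \<longrightarrow> wseminorm U f j g < \<infinity>)}"

text \<open>Completeness of the locally convex space C^k_W(U,Y): every Cauchy net (given as a
  map from an index type along a proper filter, which covers directed sets) converges
  with respect to the seminorms to an element of the space.\<close>
definition CkW_complete :: "enat \<Rightarrow> 'a::real_normed_vector set \<Rightarrow> ('a \<Rightarrow> ereal) set \<Rightarrow> ('i \<Rightarrow> 'a \<Rightarrow> 'b::real_normed_vector) \<Rightarrow> 'i filter \<Rightarrow> bool" where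
  "CkW_complete k U W net F \<longleftrightarrow>
    (F \<noteq> bot \<and> (\<forall>\<^sub>F i in F. net i \<in> CkW k U W) \<and>
     (\<forall>f\<in>W. \<forall>j. enat j \<le> k \<longrightarrow> (\<forall>e>0. \<forall>\<^sub>F (a, b) in F \<times>\<^sub>F F.
         wseminorm U f j (\<lambda>x. net a x - net b x) < ereal e)))
    \<longrightarrow> (\<exists>g\<in>CkW k U W. \<forall>f\<in>W. \<forall>j. enat j \<le> k \<longrightarrow> (\<forall>e>0. \<forall>\<^sub>F a in F.
         wseminorm U f j (\<lambda>x. net a x - g x) < ereal e))"

end

theory Submission
  imports Defs
begin

text \<open>
  Let \<open>(g\<^sub>a)\<close> be a Cauchy net. On a compact \<open>K \<subseteq> U\<close> some weight \<open>f\<close> is bounded below by a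
  constant \<open>c > 0\<close>, so the seminorm \<open>\<parallel>\<cdot>\<parallel>\<^sub>f\<^sub>,\<^sub>j\<close> dominates \<open>c\<close> times the supremum over \<open>K\<close> of the
  operator norm of the \<open>j\<close>-th derivative. Hence every \<open>D\<^sup>j g\<^sub>a\<close> is uniformly Cauchy on compact
  sets and, \<open>Y\<close> being complete, converges uniformly on compacts to a bounded \<open>j\<close>-linear map
  \<open>L\<^sub>j(x)\<close>. Compact sets suffice for the classical arguments: continuity passes to \<open>L\<^sub>j\<close> along
  convergent sequences (a convergent sequence together with its limit is compact), and the
  mean value inequality for \<open>D\<^sup>j g\<^sub>a\<close> on a segment shows in the limit that \<open>L\<^sub>j\<close> is
  differentiable with derivative \<open>L\<^sub>j\<^sub>+\<^sub>1\<close>. Thus \<open>g = L\<^sub>0\<close> is \<open>C\<^sup>k\<close> with \<open>D\<^sup>j g = L\<^sub>j\<close>, and the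
  Cauchy estimates, passed to the limit pointwise, give convergence and finiteness in every
  weighted seminorm.
\<close>

text \<open>Weights may be infinite and, since \<open>\<infinity> * 0 = 0\<close>, multiplication by \<open>\<bar>w\<bar>\<close> need not be
  continuous at \<open>0\<close>.\<close>

lemma abs_mult_le_of_tendsto:
  fixes w :: ereal and g :: "'i \<Rightarrow> real"
  assumes lim: "(g \<longlongrightarrow> l) F" and "F \<noteq> bot" and "0 \<le> e"
    and bound: "\<forall>\<^sub>F b in F. \<bar>w\<bar> * ereal (g b) \<le> ereal e"
  shows "\<bar>w\<bar> * ereal l \<le> ereal e"
proof (cases "\<bar>w\<bar>")
  case (real r)
  have "((\<lambda>b. r * g b) \<longlongrightarrow> r * l) F"
    by (intro tendsto_mult tendsto_const lim)
  moreover have "\<forall>\<^sub>F b in F. r * g b \<le> e"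
    using bound by (rule eventually_mono) (simp add: real)
  ultimately show ?thesis
    using \<open>F \<noteq> bot\<close> real by (simp add: tendsto_upperbound)
next
  case PInf
  have "\<forall>\<^sub>F b in F. g b \<le> 0"
    using bound by (rule eventually_mono) (use PInf in \<open>auto split: if_splits\<close>)
  then have "l \<le> 0"
    using \<open>F \<noteq> bot\<close> lim by (simp add: tendsto_upperbound)
  then show ?thesis
    using PInf \<open>0 \<le> e\<close> by (cases "l = 0") auto
qed (use abs_ereal_ge0[of w] in simp)

lemma compact_insert_range_LIMSEQ:
  fixes X :: "nat \<Rightarrow> 'a::metric_space"
  assumes "X \<longlonglongrightarrow> l"
  shows "compact (insert l (range X))"
proof (rule compactI)
  fix C
  assume C: "\<forall>t\<in>C. open t" "insert l (range X) \<subseteq> \<Union>C"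
  then obtain T where T: "T \<in> C" "l \<in> T"
    by blast
  with assms C(1) obtain N where N: "\<And>m. m \<ge> N \<Longrightarrow> X m \<in> T"
    unfolding tendsto_def eventually_sequentially by blast
  have "\<forall>m. \<exists>V\<in>C. X m \<in> V"
    using C(2) by blast
  then obtain V where V: "\<And>m. V m \<in> C \<and> X m \<in> V m"
    by metis
  have "insert l (range X) \<subseteq> \<Union>(insert T (V ` {..<N}))"
    using T N V by (auto simp: not_le) (meson lessThan_iff not_le)
  then show "\<exists>C'\<subseteq>C. finite C' \<and> insert l (range X) \<subseteq> \<Union>C'"
    using T V by (intro exI[of _ "insert T (V ` {..<N})"]) auto
qed

lemma tendsto_Lim_cauchy_net:
  fixes h :: "'i \<Rightarrow> 'b::complete_space"
  assumes "F \<noteq> bot"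
    and cauchy: "\<And>e. e > 0 \<Longrightarrow> \<forall>\<^sub>F (a, b) in F \<times>\<^sub>F F. dist (h a) (h b) < e"
  shows "(h \<longlongrightarrow> Lim F h) F"
proof -
  have "cauchy_filter (filtermap h F)"
    unfolding cauchy_filter_def filtermap_prod_filter[symmetric] le_filter_def eventually_filtermap
  proof (intro allI impI)
    fix P :: "'b \<times> 'b \<Rightarrow> bool"
    assume "eventually P uniformity"
    then obtain e where "e > 0" and e: "\<And>x y. dist x y < e \<Longrightarrow> P (x, y)"
      unfolding eventually_uniformity_metric by blast
    show "\<forall>\<^sub>F p in F \<times>\<^sub>F F. P (map_prod h h p)"
      using cauchy[OF \<open>e > 0\<close>] by (rule eventually_mono) (auto intro: e)
  qed
  then obtain l where "filtermap h F \<le> nhds l"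
    using cauchy_filter_complete_converges[OF _ complete_UNIV] \<open>F \<noteq> bot\<close>
    by (metis filtermap_bot_iff top_greatest principal_UNIV)
  then have "(h \<longlongrightarrow> l) F"
    by (simp add: filterlim_def)
  then show ?thesis
    using \<open>F \<noteq> bot\<close> tendsto_Lim by blast
qed

lemma uniform_limit_of_uniformly_cauchy:
  fixes h :: "'i \<Rightarrow> 's \<Rightarrow> 'b::metric_space"
  assumes "F \<noteq> bot"
    and cauchy: "\<forall>\<^sub>F (a, b) in F \<times>\<^sub>F F. Q a \<and> (\<forall>s\<in>S. dist (h a s) (h b s) \<le> e)"
    and lim: "\<And>s. s \<in> S \<Longrightarrow> ((\<lambda>b. h b s) \<longlongrightarrow> l s) F"
  shows "\<forall>\<^sub>F a in F. Q a \<and> (\<forall>s\<in>S. dist (h a s) (l s) \<le> e)"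
proof -
  obtain P R where "eventually P F" and "eventually R F"
    and PR: "\<And>a b. P a \<Longrightarrow> R b \<Longrightarrow> Q a \<and> (\<forall>s\<in>S. dist (h a s) (h b s) \<le> e)"
    using cauchy unfolding eventually_prod_filter by auto
  show ?thesis
    using \<open>eventually P F\<close>
  proof (rule eventually_mono)
    fix a
    assume "P a"
    obtain b where "R b"
      using eventually_happens'[OF \<open>F \<noteq> bot\<close> \<open>eventually R F\<close>] by blast
    have "dist (h a s) (l s) \<le> e" if "s \<in> S" for s
      using tendsto_dist[OF tendsto_const lim[OF that]]
    proof (rule tendsto_upperbound)
      show "\<forall>\<^sub>F b in F. dist (h a s) (h b s) \<le> e"
        using \<open>eventually R F\<close> by (rule eventually_mono) (use PR[OF \<open>P a\<close>] that in blast)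
    qed (rule \<open>F \<noteq> bot\<close>)
    then show "Q a \<and> (\<forall>s\<in>S. dist (h a s) (l s) \<le> e)"
      using PR[OF \<open>P a\<close> \<open>R b\<close>] by blast
  qed
qed

section \<open>Bounded multilinear maps\<close>

lemma bounded_multilinear_cong:
  "bounded_multilinear j A \<Longrightarrow> (\<And>i. i < j \<Longrightarrow> v i = w i) \<Longrightarrow> A v = A w"
  unfolding bounded_multilinear_def by blast

lemma bounded_multilinear_linear:
  "bounded_multilinear j A \<Longrightarrow> i < j \<Longrightarrow> linear (\<lambda>h. A (v(i := h)))"
  unfolding bounded_multilinear_def by blast

lemma norm_le_mopnorm:
  fixes A :: "(nat \<Rightarrow> 'a::real_normed_vector) \<Rightarrow> 'b::real_normed_vector"
  assumes "bounded_multilinear j A" and "\<forall>i<j. norm (v i) \<le> 1"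
  shows "norm (A v) \<le> mopnorm j A"
  unfolding mopnorm_def
proof (rule cSup_upper)
  show "bdd_above ((\<lambda>v. norm (A v)) ` {v. \<forall>i<j. norm (v i) \<le> 1})"
    using assms(1) unfolding bounded_multilinear_def by (elim conjE)
qed (use assms(2) in simp)

lemma mopnorm_nonneg:
  fixes A :: "(nat \<Rightarrow> 'a::real_normed_vector) \<Rightarrow> 'b::real_normed_vector"
  assumes "bounded_multilinear j A"
  shows "0 \<le> mopnorm j A"
  using order_trans[OF norm_ge_zero norm_le_mopnorm[OF assms, of "\<lambda>_. 0"]] by simp

lemma mopnorm_le:
  fixes A :: "(nat \<Rightarrow> 'a::real_normed_vector) \<Rightarrow> 'b::real_normed_vector"
  assumes "\<And>v. \<forall>i<j. norm (v i) \<le> 1 \<Longrightarrow> norm (A v) \<le> c"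
  shows "mopnorm j A \<le> c"
  unfolding mopnorm_def
proof (rule cSup_least)
  have "norm (A (\<lambda>_. 0)) \<in> (\<lambda>v. norm (A v)) ` {v. \<forall>i<j. norm (v i) \<le> 1}"
    by (rule imageI) simp
  then show "(\<lambda>v. norm (A v)) ` {v. \<forall>i<j. norm (v i) \<le> 1} \<noteq> {}"
    by blast
qed (use assms in blast)

lemma mopnorm_diff_commute:
  "mopnorm j (\<lambda>v. A v - B v) = mopnorm j (\<lambda>v. B v - A v)"
  by (simp add: mopnorm_def norm_minus_commute)

lemma bounded_multilinear_zero_arg:
  fixes A :: "(nat \<Rightarrow> 'a::real_normed_vector) \<Rightarrow> 'b::real_normed_vector"
  assumes "bounded_multilinear j A" and "i < j" and "v i = 0"
  shows "A v = 0"
  using linear_0[OF bounded_multilinear_linear[OF assms(1,2), of v]] assms(3)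
  by (simp add: fun_upd_idem)

lemma norm_multilinear_le:
  fixes A :: "(nat \<Rightarrow> 'a::real_normed_vector) \<Rightarrow> 'b::real_normed_vector"
  assumes A: "bounded_multilinear j A"
  shows "norm (A v) \<le> mopnorm j A * (\<Prod>i<j. norm (v i))"
proof (cases "\<exists>i<j. v i = 0")
  case True
  then obtain i where "i < j" and "v i = 0"
    by blast
  then have "A v = 0"
    by (rule bounded_multilinear_zero_arg[OF A])
  moreover have "(\<Prod>i<j. norm (v i)) = 0"
    by (rule prod_zero) (use \<open>i < j\<close> \<open>v i = 0\<close> in auto)
  ultimately show ?thesis
    by (simp only: norm_zero mult_zero_right order_refl)
next
  case False
  define u where "u m = (\<lambda>i. if i < m then v i /\<^sub>R norm (v i) else v i)" for m
  have scale: "A v = (\<Prod>i<m. norm (v i)) *\<^sub>R A (u m)" if "m \<le> j" for m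
    using that
  proof (induction m)
    case (Suc m)
    have "u m = (u (Suc m))(m := norm (v m) *\<^sub>R u (Suc m) m)"
      using False Suc.prems by (auto simp: u_def fun_eq_iff)
    then have "A (u m) = norm (v m) *\<^sub>R A (u (Suc m))"
      using linear_cmul[OF bounded_multilinear_linear[OF A, of m "u (Suc m)"]] Suc.prems
      by (simp add: fun_upd_idem)
    with Suc show ?case by (simp add: mult.commute)
  qed (simp add: u_def)
  have "norm (A (u j)) \<le> mopnorm j A"
    by (rule norm_le_mopnorm[OF A]) (use False in \<open>auto simp: u_def\<close>)
  then show ?thesis
    using scale[of j] by (simp add: prod_nonneg mult.commute mult_right_mono)
qed

lemma prod_norm_case_nat:
  "(\<Prod>i<Suc j. norm (case_nat h v i)) = norm h * (\<Prod>i<j. norm (v i))"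
  by (simp only: prod.lessThan_Suc_shift) simp

lemma norm_multilinear_case_nat_le:
  fixes A :: "(nat \<Rightarrow> 'a::real_normed_vector) \<Rightarrow> 'b::real_normed_vector"
  assumes A: "bounded_multilinear (Suc j) A" and v: "\<forall>i<j. norm (v i) \<le> 1"
  shows "norm (A (case_nat h v)) \<le> mopnorm (Suc j) A * norm h"
proof -
  have "(\<Prod>i<j. norm (v i)) \<le> 1"
    using v by (intro prod_le_1) auto
  then have "norm h * (\<Prod>i<j. norm (v i)) \<le> norm h"
    by (simp add: mult_left_le)
  then show ?thesis
    using norm_multilinear_le[OF A, of "case_nat h v", unfolded prod_norm_case_nat] mopnorm_nonneg[OF A]
    by (meson mult_left_mono order_trans)
qed

lemma bounded_multilinear_diff:
  fixes A B :: "(nat \<Rightarrow> 'a::real_normed_vector) \<Rightarrow> 'b::real_normed_vector"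
  assumes A: "bounded_multilinear j A" and B: "bounded_multilinear j B"
  shows "bounded_multilinear j (\<lambda>v. A v - B v)"
  unfolding bounded_multilinear_def
proof (intro conjI allI impI)
  show "A v - B v = A w - B w" if "\<forall>i<j. v i = w i" for v w
    using bounded_multilinear_cong[OF A] bounded_multilinear_cong[OF B] that by metis
  show "linear (\<lambda>h. A (v(i := h)) - B (v(i := h)))" if "i < j" for i v
    using bounded_multilinear_linear[OF A that] bounded_multilinear_linear[OF B that]
    by (rule linear_compose_sub)
  have "norm (A v - B v) \<le> mopnorm j A + mopnorm j B" if "\<forall>i<j. norm (v i) \<le> 1" for v
    using norm_triangle_ineq4[of "A v" "B v"] norm_le_mopnorm[OF A that] norm_le_mopnorm[OF B that]
    by linarith
  then show "bdd_above ((\<lambda>v. norm (A v - B v)) ` {v. \<forall>i<j. norm (v i) \<le> 1})"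
    by (intro bdd_aboveI2) simp
qed

lemma bounded_multilinear_case_nat:
  fixes A :: "(nat \<Rightarrow> 'a::real_normed_vector) \<Rightarrow> 'b::real_normed_vector"
  assumes A: "bounded_multilinear (Suc j) A"
  shows "bounded_multilinear j (\<lambda>v. A (case_nat h v))"
  unfolding bounded_multilinear_def
proof (intro conjI allI impI)
  show "A (case_nat h v) = A (case_nat h w)" if "\<forall>i<j. v i = w i" for v w
    by (rule bounded_multilinear_cong[OF A]) (use that in \<open>auto split: nat.split\<close>)
  show "linear (\<lambda>x. A (case_nat h (v(i := x))))" if "i < j" for i v
  proof -
    have "case_nat h (v(i := x)) = (case_nat h v)(Suc i := x)" for x
      by (auto simp: fun_eq_iff split: nat.split)
    then show ?thesis
      using bounded_multilinear_linear[OF A, of "Suc i" "case_nat h v"] that by simp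
  qed
  show "bdd_above ((\<lambda>v. norm (A (case_nat h v))) ` {v. \<forall>i<j. norm (v i) \<le> 1})"
    using norm_multilinear_case_nat_le[OF A]
    by (intro bdd_aboveI2[of _ _ "mopnorm (Suc j) A * norm h"]) auto
qed

lemma bounded_linear_case_nat:
  fixes A :: "(nat \<Rightarrow> 'a::real_normed_vector) \<Rightarrow> 'b::real_normed_vector"
  assumes A: "bounded_multilinear (Suc j) A"
  shows "bounded_linear (\<lambda>h. A (case_nat h w))"
proof -
  have "linear (\<lambda>h. A ((case_nat 0 w)(0 := h)))"
    using bounded_multilinear_linear[OF A] by blast
  moreover have "(case_nat 0 w)(0 := h) = case_nat h w" for h
    by (auto simp: fun_eq_iff split: nat.split)
  ultimately have "linear (\<lambda>h. A (case_nat h w))"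
    by simp
  moreover have "norm (A (case_nat h w)) \<le> norm h * (mopnorm (Suc j) A * (\<Prod>i<j. norm (w i)))" for h
    using norm_multilinear_le[OF A, of "case_nat h w", unfolded prod_norm_case_nat]
    by (simp add: ac_simps)
  ultimately show ?thesis
    unfolding bounded_linear_def bounded_linear_axioms_def by blast
qed

lemma mopnorm_triangle:
  fixes A B C :: "(nat \<Rightarrow> 'a::real_normed_vector) \<Rightarrow> 'b::real_normed_vector"
  assumes A: "bounded_multilinear j A" and B: "bounded_multilinear j B"
    and C: "bounded_multilinear j C"
  shows "mopnorm j (\<lambda>v. A v - C v) \<le> mopnorm j (\<lambda>v. A v - B v) + mopnorm j (\<lambda>v. B v - C v)"
proof (rule mopnorm_le)
  fix v :: "nat \<Rightarrow> 'a"
  assume v: "\<forall>i<j. norm (v i) \<le> 1"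
  have "norm (A v - C v) \<le> norm (A v - B v) + norm (B v - C v)"
    using norm_triangle_ineq[of "A v - B v" "B v - C v"] by simp
  also have "\<dots> \<le> mopnorm j (\<lambda>v. A v - B v) + mopnorm j (\<lambda>v. B v - C v)"
    using norm_le_mopnorm[OF bounded_multilinear_diff[OF A B] v]
      norm_le_mopnorm[OF bounded_multilinear_diff[OF B C] v]
    by (rule add_mono)
  finally show "norm (A v - C v) \<le> mopnorm j (\<lambda>v. A v - B v) + mopnorm j (\<lambda>v. B v - C v)" .
qed

lemma mopnorm_triangle3:
  fixes A B C D :: "(nat \<Rightarrow> 'a::real_normed_vector) \<Rightarrow> 'b::real_normed_vector"
  assumes "bounded_multilinear j A" and "bounded_multilinear j B"
    and "bounded_multilinear j C" and "bounded_multilinear j D"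
  shows "mopnorm j (\<lambda>v. A v - D v)
    \<le> mopnorm j (\<lambda>v. A v - B v) + mopnorm j (\<lambda>v. B v - C v) + mopnorm j (\<lambda>v. C v - D v)"
  using mopnorm_triangle[OF assms(1,2,4)] mopnorm_triangle[OF assms(2-4)] by linarith

lemma bounded_multilinear_limit:
  fixes A :: "'i \<Rightarrow> (nat \<Rightarrow> 'a::real_normed_vector) \<Rightarrow> 'b::real_normed_vector"
  assumes "F \<noteq> bot"
    and bm: "\<forall>\<^sub>F a in F. bounded_multilinear j (A a)"
    and lim: "\<And>v. ((\<lambda>a. A a v) \<longlongrightarrow> B v) F"
    and close: "\<forall>\<^sub>F a in F. \<forall>v. (\<forall>i<j. norm (v i) \<le> 1) \<longrightarrow> norm (A a v - B v) \<le> 1"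
  shows "bounded_multilinear j B"
proof -
  have limit_eq: "B v = y" if "\<forall>\<^sub>F a in F. A a v = z a" and "(z \<longlongrightarrow> y) F" for v z y
    using tendsto_unique[OF \<open>F \<noteq> bot\<close> lim[of v]] tendsto_cong[OF that(1)] that(2) by blast
  obtain a where a: "bounded_multilinear j (A a)"
    "\<forall>v. (\<forall>i<j. norm (v i) \<le> 1) \<longrightarrow> norm (A a v - B v) \<le> 1"
    using eventually_happens'[OF \<open>F \<noteq> bot\<close> eventually_conj[OF bm close]] by blast
  show ?thesis
    unfolding bounded_multilinear_def
  proof (intro conjI allI impI)
    show "B v = B w" if "\<forall>i<j. v i = w i" for v w
      by (rule limit_eq[OF _ lim[of w]])
        (use bm that in \<open>auto elim!: eventually_mono intro: bounded_multilinear_cong\<close>)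
    show "linear (\<lambda>h. B (v(i := h)))" if "i < j" for i v
    proof (rule linearI)
      show "B (v(i := x + y)) = B (v(i := x)) + B (v(i := y))" for x y
        by (rule limit_eq[OF _ tendsto_add[OF lim lim]])
          (use bm that in \<open>auto elim!: eventually_mono dest: bounded_multilinear_linear linear_add\<close>)
      show "B (v(i := r *\<^sub>R x)) = r *\<^sub>R B (v(i := x))" for r x
        by (rule limit_eq[OF _ tendsto_scaleR[OF tendsto_const lim]])
          (use bm that in \<open>auto elim!: eventually_mono dest: bounded_multilinear_linear linear_cmul\<close>)
    qed
    show "bdd_above ((\<lambda>v. norm (B v)) ` {v. \<forall>i<j. norm (v i) \<le> 1})"
    proof (rule bdd_aboveI2)
      fix v :: "nat \<Rightarrow> 'a"
      assume "v \<in> {v. \<forall>i<j. norm (v i) \<le> 1}"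
      then have "norm (A a v) \<le> mopnorm j (A a)" and "norm (A a v - B v) \<le> 1"
        using norm_le_mopnorm[OF a(1)] a(2) by auto
      then show "norm (B v) \<le> mopnorm j (A a) + 1"
        using norm_triangle_ineq2[of "B v" "A a v"] norm_minus_commute[of "A a v" "B v"] by linarith
    qed
  qed
qed

lemma abs_mult_mopnorm_le_iff:
  fixes A :: "(nat \<Rightarrow> 'a::real_normed_vector) \<Rightarrow> 'b::real_normed_vector" and w c :: ereal
  assumes A: "bounded_multilinear j A"
  shows "\<bar>w\<bar> * ereal (mopnorm j A) \<le> c \<longleftrightarrow>
    (\<forall>v. (\<forall>i<j. norm (v i) \<le> 1) \<longrightarrow> \<bar>w\<bar> * ereal (norm (A v)) \<le> c)"
proof -
  let ?B = "{v :: nat \<Rightarrow> 'a. \<forall>i<j. norm (v i) \<le> 1}"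
  have "(\<lambda>_. 0) \<in> ?B"
    by simp
  then have "?B \<noteq> {}"
    by (intro notI) (simp only: empty_iff)
  have "bdd_above ((\<lambda>v. norm (A v)) ` ?B)"
    using A unfolding bounded_multilinear_def by (elim conjE)
  then have "ereal (mopnorm j A) = Sup (ereal ` (\<lambda>v. norm (A v)) ` ?B)"
    unfolding mopnorm_def using \<open>?B \<noteq> {}\<close>
    by (intro continuous_at_Sup_mono)
      (auto simp: mono_def continuous_at_imp_continuous_at_within continuous_at_ereal)
  also have "\<dots> = (SUP v\<in>?B. ereal (norm (A v)))"
    by (simp add: image_image)
  also have "\<bar>w\<bar> * \<dots> = (SUP v\<in>?B. \<bar>w\<bar> * ereal (norm (A v)))"
    using \<open>?B \<noteq> {}\<close> by (intro SUP_ereal_mult_left[symmetric]) auto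
  finally show ?thesis
    by (simp add: SUP_le_iff)
qed

section \<open>Higher Frechet derivatives and weighted seminorms\<close>

lemma enat_Suc_leD: "enat (Suc j) \<le> k \<Longrightarrow> enat j \<le> k"
  by (metis Suc_ile_eq order_less_imp_le)

lemma has_derivative_of_mopnorm_remainder:
  fixes A :: "'a::real_normed_vector \<Rightarrow> (nat \<Rightarrow> 'a) \<Rightarrow> 'b::real_normed_vector"
  assumes "open U" and "x \<in> U"
    and A: "\<And>y. y \<in> U \<Longrightarrow> bounded_multilinear j (A y)"
    and A': "bounded_multilinear (Suc j) A'"
    and remainder: "((\<lambda>y. mopnorm j (\<lambda>v. A y v - A x v - A' (case_nat (y - x) v)) / norm (y - x))
      \<longlongrightarrow> 0) (at x)"
  shows "((\<lambda>y. A y w) has_derivative (\<lambda>h. A' (case_nat h w))) (at x)"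
  unfolding has_derivative_iff_norm
proof
  show "bounded_linear (\<lambda>h. A' (case_nat h w))"
    by (rule bounded_linear_case_nat[OF A'])
  define P where "P = (\<Prod>i<j. norm (w i))"
  let ?M = "\<lambda>y v. A y v - A x v - A' (case_nat (y - x) v)"
  have upper: "\<forall>\<^sub>F y in at x. norm (?M y w) / norm (y - x) \<le> mopnorm j (?M y) / norm (y - x) * P"
    using eventually_at_in_open'[OF \<open>open U\<close> \<open>x \<in> U\<close>]
  proof (rule eventually_mono)
    fix y
    assume "y \<in> U"
    then have "bounded_multilinear j (?M y)"
      by (intro bounded_multilinear_diff bounded_multilinear_case_nat A A' \<open>x \<in> U\<close>)
    then show "norm (?M y w) / norm (y - x) \<le> mopnorm j (?M y) / norm (y - x) * P"
      using norm_multilinear_le[of j "?M y" w] by (simp add: P_def divide_right_mono)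
  qed
  have "((\<lambda>y. mopnorm j (?M y) / norm (y - x) * P) \<longlongrightarrow> 0 * P) (at x)"
    by (intro tendsto_mult remainder tendsto_const)
  then have "((\<lambda>y. mopnorm j (?M y) / norm (y - x) * P) \<longlongrightarrow> 0) (at x)"
    by simp
  then show "((\<lambda>y. norm (?M y w) / norm (y - x)) \<longlongrightarrow> 0) (at x)"
    using tendsto_sandwich[OF _ upper tendsto_const] by simp
qed

lemma Ck_bounded_multilinear:
  "Ck k U g \<Longrightarrow> enat j \<le> k \<Longrightarrow> x \<in> U \<Longrightarrow> bounded_multilinear j (hderiv j g x)"
  unfolding Ck_def by blast

lemma Ck_tendsto_hderiv:
  "Ck k U g \<Longrightarrow> enat j \<le> k \<Longrightarrow> x \<in> U \<Longrightarrow>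
    ((\<lambda>y. mopnorm j (\<lambda>v. hderiv j g y v - hderiv j g x v)) \<longlongrightarrow> 0) (at x)"
  unfolding Ck_def by blast

lemma has_derivative_hderiv:
  fixes g :: "'a::real_normed_vector \<Rightarrow> 'b::real_normed_vector"
  assumes "Ck k U g" and "open U" and "x \<in> U" and "enat (Suc j) \<le> k"
  shows "((\<lambda>y. hderiv j g y w) has_derivative (\<lambda>h. hderiv (Suc j) g x (case_nat h w))) (at x)"
proof (rule has_derivative_of_mopnorm_remainder[OF \<open>open U\<close> \<open>x \<in> U\<close>])
  show "bounded_multilinear j (hderiv j g y)" if "y \<in> U" for y
    using Ck_bounded_multilinear[OF assms(1) enat_Suc_leD[OF assms(4)] that] .
  show "bounded_multilinear (Suc j) (hderiv (Suc j) g x)"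
    using Ck_bounded_multilinear[OF assms(1,4,3)] .
  show "((\<lambda>y. mopnorm j (\<lambda>v. hderiv j g y v - hderiv j g x v
      - hderiv (Suc j) g x (case_nat (y - x) v)) / norm (y - x)) \<longlongrightarrow> 0) (at x)"
    using assms(1,3,4) unfolding Ck_def by blast
qed

lemma hderiv_Suc_eq:
  assumes "((\<lambda>y. hderiv j g y (\<lambda>i. v (Suc i))) has_derivative (\<lambda>h. D (case_nat h (\<lambda>i. v (Suc i))))) (at x)"
  shows "hderiv (Suc j) g x v = D v"
proof -
  have "case_nat (v 0) (\<lambda>i. v (Suc i)) = v"
    by (auto simp: fun_eq_iff split: nat.split)
  with fun_cong[OF frechet_derivative_at[OF assms], of "v 0"] show ?thesis
    by simp
qed

lemma hderiv_diff:
  fixes g h :: "'a::real_normed_vector \<Rightarrow> 'b::real_normed_vector"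
  assumes "open U" and "Ck k U g" and "Ck k U h"
  shows "enat j \<le> k \<Longrightarrow> x \<in> U \<Longrightarrow>
    hderiv j (\<lambda>x. g x - h x) x v = hderiv j g x v - hderiv j h x v"
proof (induction j arbitrary: x v)
  case (Suc j)
  let ?w = "\<lambda>i. v (Suc i)"
  have "((\<lambda>y. hderiv j g y ?w - hderiv j h y ?w) has_derivative
      (\<lambda>t. hderiv (Suc j) g x (case_nat t ?w) - hderiv (Suc j) h x (case_nat t ?w))) (at x)"
    by (intro has_derivative_diff has_derivative_hderiv[OF assms(2,1)]
        has_derivative_hderiv[OF assms(3,1)] Suc.prems)
  then have "((\<lambda>y. hderiv j (\<lambda>x. g x - h x) y ?w) has_derivative
      (\<lambda>t. hderiv (Suc j) g x (case_nat t ?w) - hderiv (Suc j) h x (case_nat t ?w))) (at x)"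
    by (rule has_derivative_transform_within_open[OF _ assms(1) Suc.prems(2)])
      (simp add: Suc.IH[OF enat_Suc_leD[OF Suc.prems(1)]])
  then show ?case
    by (rule hderiv_Suc_eq)
qed simp

lemma hderiv_linearization_bound:
  fixes g :: "'a::real_normed_vector \<Rightarrow> 'b::real_normed_vector"
  assumes "Ck k U g" and "open U" and "enat (Suc j) \<le> k" and S: "closed_segment x y \<subseteq> U"
    and B: "\<And>z. z \<in> closed_segment x y \<Longrightarrow>
      mopnorm (Suc j) (\<lambda>v. hderiv (Suc j) g z v - hderiv (Suc j) g x v) \<le> B"
    and v: "\<forall>i<j. norm (v i) \<le> 1"
  shows "norm (hderiv j g y v - hderiv j g x v - hderiv (Suc j) g x (case_nat (y - x) v))
    \<le> norm (y - x) * B"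
proof (rule differentiable_bound_linearization[where S = "closed_segment x y"
      and f' = "\<lambda>z h. hderiv (Suc j) g z (case_nat h v)"])
  show "x + t *\<^sub>R (y - x) \<in> closed_segment x y" if "t \<in> {0..1}" for t
    using that unfolding in_segment by (intro conjI exI[of _ t]) (auto simp: algebra_simps)
  show "((\<lambda>z. hderiv j g z v) has_derivative (\<lambda>h. hderiv (Suc j) g z (case_nat h v)))
      (at z within closed_segment x y)" if "z \<in> closed_segment x y" for z
    using has_derivative_hderiv[OF assms(1,2) _ assms(3)] S that
    by (blast intro: has_derivative_at_withinI)
  show "onorm ((\<lambda>h. hderiv (Suc j) g z (case_nat h v)) - (\<lambda>h. hderiv (Suc j) g x (case_nat h v))) \<le> B"
    if z: "z \<in> closed_segment x y" for z
  proof (rule onorm_bound)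
    have bm: "bounded_multilinear (Suc j) (\<lambda>w. hderiv (Suc j) g z w - hderiv (Suc j) g x w)"
      if "z \<in> closed_segment x y" for z
      using Ck_bounded_multilinear[OF assms(1,3)] S that by (blast intro: bounded_multilinear_diff)
    show "0 \<le> B"
      using B[of x] mopnorm_nonneg[OF bm[of x]] by simp
    show "norm (((\<lambda>h. hderiv (Suc j) g z (case_nat h v))
        - (\<lambda>h. hderiv (Suc j) g x (case_nat h v))) h) \<le> B * norm h" for h
      using norm_multilinear_case_nat_le[OF bm[OF z] v, of h] B[OF z]
      by (simp add: mult_right_mono order_trans)
  qed
qed simp

lemma eventually_mopnorm_remainder_le:
  fixes A A' :: "'a::real_normed_vector \<Rightarrow> (nat \<Rightarrow> 'a) \<Rightarrow> 'b::real_normed_vector"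
  assumes "open U" and "x \<in> U" and "e > 0"
    and cont: "((\<lambda>z. mopnorm (Suc j) (\<lambda>v. A' z v - A' x v)) \<longlongrightarrow> 0) (at x)"
    and linearization: "\<And>y B. closed_segment x y \<subseteq> U \<Longrightarrow>
      (\<And>z. z \<in> closed_segment x y \<Longrightarrow> mopnorm (Suc j) (\<lambda>v. A' z v - A' x v) \<le> B) \<Longrightarrow>
      mopnorm j (\<lambda>v. A y v - A x v - A' x (case_nat (y - x) v)) \<le> B * norm (y - x)"
  shows "\<forall>\<^sub>F y in at x. mopnorm j (\<lambda>v. A y v - A x v - A' x (case_nat (y - x) v)) \<le> e * norm (y - x)"
proof -
  have "\<forall>\<^sub>F z in at x. z \<in> U \<and> mopnorm (Suc j) (\<lambda>v. A' z v - A' x v) \<le> e"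
    using eventually_at_in_open'[OF \<open>open U\<close> \<open>x \<in> U\<close>] order_tendstoD(2)[OF cont \<open>e > 0\<close>]
    by eventually_elim simp
  moreover have "mopnorm (Suc j) (\<lambda>v. A' x v - A' x v) \<le> e"
    using \<open>e > 0\<close> by (intro mopnorm_le) simp
  ultimately have "\<forall>\<^sub>F z in nhds x. z \<in> U \<and> mopnorm (Suc j) (\<lambda>v. A' z v - A' x v) \<le> e"
    unfolding eventually_nhds_conv_at using \<open>x \<in> U\<close> by blast
  then obtain d where "d > 0"
    and d: "\<And>z. dist z x < d \<Longrightarrow> z \<in> U \<and> mopnorm (Suc j) (\<lambda>v. A' z v - A' x v) \<le> e"
    unfolding eventually_nhds_metric by blast
  show ?thesis
    unfolding eventually_at
  proof (intro exI[of _ d] conjI ballI impI)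
    fix y
    assume "y \<noteq> x \<and> dist y x < d"
    then have "closed_segment x y \<subseteq> ball x d"
      using \<open>d > 0\<close> by (intro closed_segment_subset) (auto simp: dist_commute)
    then show "mopnorm j (\<lambda>v. A y v - A x v - A' x (case_nat (y - x) v)) \<le> e * norm (y - x)"
      using d by (intro linearization) (auto simp: dist_commute subset_iff)
  qed (rule \<open>d > 0\<close>)
qed

lemma tendsto_mopnorm_remainder:
  fixes A A' :: "'a::real_normed_vector \<Rightarrow> (nat \<Rightarrow> 'a) \<Rightarrow> 'b::real_normed_vector"
  assumes "open U" and "x \<in> U"
    and A: "\<And>y. y \<in> U \<Longrightarrow> bounded_multilinear j (A y)"
    and A': "bounded_multilinear (Suc j) (A' x)"
    and cont: "((\<lambda>z. mopnorm (Suc j) (\<lambda>v. A' z v - A' x v)) \<longlongrightarrow> 0) (at x)"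
    and linearization: "\<And>y B. closed_segment x y \<subseteq> U \<Longrightarrow>
      (\<And>z. z \<in> closed_segment x y \<Longrightarrow> mopnorm (Suc j) (\<lambda>v. A' z v - A' x v) \<le> B) \<Longrightarrow>
      mopnorm j (\<lambda>v. A y v - A x v - A' x (case_nat (y - x) v)) \<le> B * norm (y - x)"
  shows "((\<lambda>y. mopnorm j (\<lambda>v. A y v - A x v - A' x (case_nat (y - x) v)) / norm (y - x))
    \<longlongrightarrow> 0) (at x)"
  (is "((\<lambda>y. ?R y / norm (y - x)) \<longlongrightarrow> 0) (at x)")
  unfolding tendsto_iff
proof (intro allI impI)
  fix e :: real
  assume "e > 0"
  have "\<forall>\<^sub>F y in at x. ?R y \<le> e / 2 * norm (y - x)"
    by (rule eventually_mopnorm_remainder_le[OF \<open>open U\<close> \<open>x \<in> U\<close> _ cont])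
      (use \<open>e > 0\<close> in simp, fact linearization)
  with eventually_at_in_open[OF \<open>open U\<close> \<open>x \<in> U\<close>]
  have "\<forall>\<^sub>F y in at x. y \<in> U \<and> y \<noteq> x \<and> ?R y \<le> e / 2 * norm (y - x)"
    by eventually_elim auto
  then show "\<forall>\<^sub>F y in at x. dist (?R y / norm (y - x)) 0 < e"
  proof eventually_elim
    case (elim y)
    then have "0 \<le> ?R y / norm (y - x)" and "?R y / norm (y - x) \<le> e / 2"
      using A A' \<open>x \<in> U\<close>
      by (auto intro!: divide_nonneg_nonneg mopnorm_nonneg bounded_multilinear_diff
          bounded_multilinear_case_nat simp: pos_divide_le_eq)
    then show ?case
      unfolding dist_real_def diff_zero using \<open>e > 0\<close> by linarith
  qed
qed

lemma abs_mult_norm_hderiv_diff_le_wseminorm: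
  fixes g h :: "'a::real_normed_vector \<Rightarrow> 'b::real_normed_vector"
  assumes "open U" and g: "Ck k U g" and h: "Ck k U h" and "enat j \<le> k" and "x \<in> U"
    and "\<forall>i<j. norm (v i) \<le> 1"
  shows "\<bar>f x\<bar> * ereal (norm (hderiv j g x v - hderiv j h x v)) \<le> wseminorm U f j (\<lambda>x. g x - h x)"
proof -
  have diff: "hderiv j (\<lambda>x. g x - h x) x = (\<lambda>v. hderiv j g x v - hderiv j h x v)"
    using hderiv_diff[OF assms(1-4,5)] by blast
  have "\<bar>f x\<bar> * ereal (mopnorm j (hderiv j (\<lambda>x. g x - h x) x)) \<le> wseminorm U f j (\<lambda>x. g x - h x)"
    unfolding wseminorm_def using \<open>x \<in> U\<close> by (rule SUP_upper)
  moreover have "bounded_multilinear j (\<lambda>v. hderiv j g x v - hderiv j h x v)"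
    using Ck_bounded_multilinear[OF g] Ck_bounded_multilinear[OF h] assms(4,5)
    by (blast intro: bounded_multilinear_diff)
  ultimately show ?thesis
    using \<open>\<forall>i<j. norm (v i) \<le> 1\<close> unfolding diff by (simp add: abs_mult_mopnorm_le_iff)
qed

lemma wseminorm_le_add:
  fixes g h d :: "'a::real_normed_vector \<Rightarrow> 'b::real_normed_vector"
  assumes g: "\<And>x. x \<in> U \<Longrightarrow> bounded_multilinear j (hderiv j g x)"
    and h: "\<And>x. x \<in> U \<Longrightarrow> bounded_multilinear j (hderiv j h x)"
    and d: "\<And>x. x \<in> U \<Longrightarrow> hderiv j d x = (\<lambda>v. hderiv j g x v - hderiv j h x v)"
  shows "wseminorm U f j h \<le> wseminorm U f j g + wseminorm U f j d"
  unfolding wseminorm_def[of U f j h]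
proof (rule SUP_least)
  fix x
  assume "x \<in> U"
  let ?G = "hderiv j g x" and ?H = "hderiv j h x"
  have bm: "bounded_multilinear j ?G" "bounded_multilinear j (\<lambda>v. ?G v - ?H v)"
    using g h \<open>x \<in> U\<close> by (auto intro: bounded_multilinear_diff)
  have "mopnorm j ?H \<le> mopnorm j ?G + mopnorm j (\<lambda>v. ?G v - ?H v)"
  proof (rule mopnorm_le)
    fix v :: "nat \<Rightarrow> 'a"
    assume "\<forall>i<j. norm (v i) \<le> 1"
    then have "norm (?G v) \<le> mopnorm j ?G" and "norm (?G v - ?H v) \<le> mopnorm j (\<lambda>v. ?G v - ?H v)"
      using norm_le_mopnorm bm by blast+
    then show "norm (?H v) \<le> mopnorm j ?G + mopnorm j (\<lambda>v. ?G v - ?H v)"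
      using norm_triangle_ineq2[of "?H v" "?G v"] norm_minus_commute[of "?G v" "?H v"] by linarith
  qed
  then have "\<bar>f x\<bar> * ereal (mopnorm j ?H)
      \<le> \<bar>f x\<bar> * (ereal (mopnorm j ?G) + ereal (mopnorm j (\<lambda>v. ?G v - ?H v)))"
    by (intro ereal_mult_left_mono) simp_all
  also have "\<dots> = \<bar>f x\<bar> * ereal (mopnorm j ?G) + \<bar>f x\<bar> * ereal (mopnorm j (hderiv j d x))"
    unfolding d[OF \<open>x \<in> U\<close>] using mopnorm_nonneg[OF bm(1)] mopnorm_nonneg[OF bm(2)]
    by (intro ereal_right_distrib) simp_all
  also have "\<dots> \<le> wseminorm U f j g + wseminorm U f j d"
    unfolding wseminorm_def using \<open>x \<in> U\<close> by (intro add_mono SUP_upper)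
  finally show "\<bar>f x\<bar> * ereal (mopnorm j ?H) \<le> wseminorm U f j g + wseminorm U f j d" .
qed

section \<open>Limits of Cauchy nets\<close>

locale CkW_cauchy_net =
  fixes U :: "'a::real_normed_vector set" and k :: enat and W :: "('a \<Rightarrow> ereal) set"
    and net :: "'i \<Rightarrow> 'a \<Rightarrow> 'b::banach" and F :: "'i filter"
  assumes open_U: "open U"
    and weight_positive_on_compact:
      "\<forall>K. compact K \<and> K \<subseteq> U \<longrightarrow> (\<exists>f\<in>W. (INF x\<in>K. \<bar>f x\<bar>) > 0)"
    and F_proper: "F \<noteq> bot"
    and eventually_in_CkW: "\<forall>\<^sub>F a in F. net a \<in> CkW k U W"
    and cauchy: "\<forall>f\<in>W. \<forall>j. enat j \<le> k \<longrightarrow> (\<forall>e>0. \<forall>\<^sub>F (a, b) in F \<times>\<^sub>F F.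
      wseminorm U f j (\<lambda>x. net a x - net b x) < ereal e)"
begin

definition lim_deriv :: "nat \<Rightarrow> 'a \<Rightarrow> (nat \<Rightarrow> 'a) \<Rightarrow> 'b" where
  "lim_deriv j x v = Lim F (\<lambda>a. hderiv j (net a) x v)"

definition lim_fun :: "'a \<Rightarrow> 'b" where
  "lim_fun x = Lim F (\<lambda>a. net a x)"

lemma eventually_Ck: "\<forall>\<^sub>F a in F. Ck k U (net a)"
  using eventually_in_CkW by (rule eventually_mono) (simp add: CkW_def)

lemma eventually_cauchy_Ck:
  assumes "f \<in> W" and "enat j \<le> k" and "e > 0"
  shows "\<forall>\<^sub>F (a, b) in F \<times>\<^sub>F F. Ck k U (net a) \<and> Ck k U (net b) \<and>
    wseminorm U f j (\<lambda>x. net a x - net b x) < ereal e"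
proof -
  have "\<forall>\<^sub>F (a, b) in F \<times>\<^sub>F F. Ck k U (net a) \<and> Ck k U (net b)"
    unfolding eventually_prod_filter using eventually_Ck by blast
  moreover have "\<forall>\<^sub>F (a, b) in F \<times>\<^sub>F F. wseminorm U f j (\<lambda>x. net a x - net b x) < ereal e"
    using cauchy assms by blast
  ultimately show ?thesis
    by eventually_elim (auto split: prod.splits)
qed

lemma weight_bounded_below:
  assumes "compact K" and "K \<subseteq> U"
  obtains f c where "f \<in> W" and "c > 0" and "\<And>x. x \<in> K \<Longrightarrow> ereal c \<le> \<bar>f x\<bar>"
proof -
  obtain f where "f \<in> W" and "(INF x\<in>K. \<bar>f x\<bar>) > 0"
    using weight_positive_on_compact assms by blast
  then obtain c where "0 < ereal c" and c: "ereal c < (INF x\<in>K. \<bar>f x\<bar>)"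
    using ereal_dense2 by blast
  have "ereal c \<le> \<bar>f x\<bar>" if "x \<in> K" for x
    using c INF_lower[OF that, of "\<lambda>x. \<bar>f x\<bar>"] by simp
  with \<open>0 < ereal c\<close> show ?thesis
    using that[OF \<open>f \<in> W\<close>] by simp
qed

lemma uniformly_cauchy_on_compact:
  assumes "compact K" and "K \<subseteq> U" and j: "enat j \<le> k" and "e > 0"
  shows "\<forall>\<^sub>F (a, b) in F \<times>\<^sub>F F. Ck k U (net a) \<and> Ck k U (net b) \<and> (\<forall>x\<in>K. \<forall>v.
    (\<forall>i<j. norm (v i) \<le> 1) \<longrightarrow> norm (hderiv j (net a) x v - hderiv j (net b) x v) \<le> e)"
proof -
  obtain f c where "f \<in> W" and "c > 0" and c: "\<And>x. x \<in> K \<Longrightarrow> ereal c \<le> \<bar>f x\<bar>"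
    using weight_bounded_below[OF assms(1,2)] by blast
  from \<open>e > 0\<close> \<open>c > 0\<close> have "e * c > 0"
    by simp
  from eventually_cauchy_Ck[OF \<open>f \<in> W\<close> j this] show ?thesis
  proof (rule eventually_mono, clarify)
    fix a b x and v :: "nat \<Rightarrow> 'a"
    assume ab: "Ck k U (net a)" "Ck k U (net b)"
      and small: "wseminorm U f j (\<lambda>x. net a x - net b x) < ereal (e * c)"
      and "x \<in> K" and v: "\<forall>i<j. norm (v i) \<le> 1"
    have "ereal c * ereal (norm (hderiv j (net a) x v - hderiv j (net b) x v))
        \<le> \<bar>f x\<bar> * ereal (norm (hderiv j (net a) x v - hderiv j (net b) x v))"
      using c[OF \<open>x \<in> K\<close>] by (rule ereal_mult_right_mono) simp
    also have "\<dots> \<le> wseminorm U f j (\<lambda>x. net a x - net b x)"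
      using \<open>x \<in> K\<close> \<open>K \<subseteq> U\<close> by (intro abs_mult_norm_hderiv_diff_le_wseminorm[OF open_U ab j _ v]) auto
    also note small
    finally have "c * norm (hderiv j (net a) x v - hderiv j (net b) x v) < e * c"
      by simp
    with \<open>c > 0\<close> show "norm (hderiv j (net a) x v - hderiv j (net b) x v) \<le> e"
      by (simp add: mult.commute)
  qed
qed

lemma tendsto_lim_deriv:
  assumes "x \<in> U" and j: "enat j \<le> k"
  shows "((\<lambda>a. hderiv j (net a) x v) \<longlongrightarrow> lim_deriv j x v) F"
  unfolding lim_deriv_def
proof (rule tendsto_Lim_cauchy_net[OF F_proper])
  fix e :: real
  assume "e > 0"
  define P where "P = (\<Prod>i<j. norm (v i))"
  have "P \<ge> 0"
    unfolding P_def by (simp add: prod_nonneg)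
  with \<open>e > 0\<close> have "e / (P + 1) > 0"
    by simp
  from uniformly_cauchy_on_compact[of "{x}", OF _ _ j this] \<open>x \<in> U\<close>
  show "\<forall>\<^sub>F (a, b) in F \<times>\<^sub>F F. dist (hderiv j (net a) x v) (hderiv j (net b) x v) < e"
  proof (auto elim!: eventually_mono)
    fix a b
    assume ab: "Ck k U (net a)" "Ck k U (net b)"
      and small: "\<forall>w. (\<forall>i<j. norm (w i) \<le> 1) \<longrightarrow>
        norm (hderiv j (net a) x w - hderiv j (net b) x w) \<le> e / (P + 1)"
    have "norm (hderiv j (net a) x v - hderiv j (net b) x v)
        \<le> mopnorm j (\<lambda>v. hderiv j (net a) x v - hderiv j (net b) x v) * P"
      unfolding P_def using ab j \<open>x \<in> U\<close>
      by (intro norm_multilinear_le bounded_multilinear_diff Ck_bounded_multilinear)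
    also have "\<dots> \<le> e / (P + 1) * P"
      using small \<open>P \<ge> 0\<close> by (intro mult_right_mono mopnorm_le) auto
    also have "\<dots> < e"
      using \<open>e > 0\<close> \<open>P \<ge> 0\<close> by (simp add: field_simps)
    finally show "dist (hderiv j (net a) x v) (hderiv j (net b) x v) < e"
      by (simp add: dist_norm)
  qed
qed

lemma uniform_limit_on_compact:
  assumes "compact K" and "K \<subseteq> U" and j: "enat j \<le> k" and "e > 0"
  shows "\<forall>\<^sub>F a in F. Ck k U (net a) \<and> (\<forall>x\<in>K. \<forall>v. (\<forall>i<j. norm (v i) \<le> 1) \<longrightarrow>
    norm (hderiv j (net a) x v - lim_deriv j x v) \<le> e)"
proof -
  let ?S = "K \<times> {v. \<forall>i<j. norm (v i) \<le> 1}"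
  have "\<forall>\<^sub>F a in F. Ck k U (net a) \<and>
      (\<forall>s\<in>?S. dist (hderiv j (net a) (fst s) (snd s)) (lim_deriv j (fst s) (snd s)) \<le> e)"
  proof (rule uniform_limit_of_uniformly_cauchy[OF F_proper])
    show "\<forall>\<^sub>F (a, b) in F \<times>\<^sub>F F. Ck k U (net a) \<and>
        (\<forall>s\<in>?S. dist (hderiv j (net a) (fst s) (snd s)) (hderiv j (net b) (fst s) (snd s)) \<le> e)"
      using uniformly_cauchy_on_compact[OF assms] by (auto elim!: eventually_mono simp: dist_norm)
    show "((\<lambda>b. hderiv j (net b) (fst s) (snd s)) \<longlongrightarrow> lim_deriv j (fst s) (snd s)) F"
      if "s \<in> ?S" for s
      using that \<open>K \<subseteq> U\<close> j by (intro tendsto_lim_deriv) auto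
  qed
  then show ?thesis
    by (auto elim!: eventually_mono simp: dist_norm)
qed

lemma bounded_multilinear_lim_deriv:
  assumes "x \<in> U" and j: "enat j \<le> k"
  shows "bounded_multilinear j (lim_deriv j x)"
proof (rule bounded_multilinear_limit[OF F_proper _ tendsto_lim_deriv[OF assms]])
  show "\<forall>\<^sub>F a in F. bounded_multilinear j (hderiv j (net a) x)"
    using eventually_Ck by (rule eventually_mono) (rule Ck_bounded_multilinear[OF _ j \<open>x \<in> U\<close>])
  show "\<forall>\<^sub>F a in F. \<forall>v. (\<forall>i<j. norm (v i) \<le> 1) \<longrightarrow>
      norm (hderiv j (net a) x v - lim_deriv j x v) \<le> 1"
    using uniform_limit_on_compact[of "{x}" j 1] assms by (auto elim!: eventually_mono)
qed

lemma uniform_limit_on_compact_mopnorm: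
  assumes "compact K" and "K \<subseteq> U" and j: "enat j \<le> k" and "e > 0"
  shows "\<forall>\<^sub>F a in F. Ck k U (net a) \<and>
    (\<forall>x\<in>K. mopnorm j (\<lambda>v. hderiv j (net a) x v - lim_deriv j x v) \<le> e)"
  using uniform_limit_on_compact[OF assms] by (auto elim!: eventually_mono intro: mopnorm_le)

lemma tendsto_mopnorm_lim_deriv_sequentially:
  assumes "x \<in> U" and j: "enat j \<le> k"
    and XU: "range X \<subseteq> U" and X: "filterlim X (at x) sequentially"
  shows "(\<lambda>m. mopnorm j (\<lambda>v. lim_deriv j (X m) v - lim_deriv j x v)) \<longlonglongrightarrow> 0"
proof (rule order_tendstoI)
  fix e :: real
  assume "e > 0"
  have K: "compact (insert x (range X))" "insert x (range X) \<subseteq> U"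
    using compact_insert_range_LIMSEQ X XU \<open>x \<in> U\<close> by (auto simp: filterlim_at)
  obtain a where a: "Ck k U (net a)" and close: "\<And>y. y \<in> insert x (range X) \<Longrightarrow>
      mopnorm j (\<lambda>v. hderiv j (net a) y v - lim_deriv j y v) \<le> e / 3"
    using eventually_happens'[OF F_proper uniform_limit_on_compact_mopnorm[OF K j, of "e / 3"]] \<open>e > 0\<close>
    by auto
  let ?D = "hderiv j (net a)" and ?L = "lim_deriv j"
  have bm: "bounded_multilinear j (?D y)" "bounded_multilinear j (?L y)" if "y \<in> U" for y
    using Ck_bounded_multilinear[OF a j that] bounded_multilinear_lim_deriv[OF that j] by auto
  have "(\<lambda>m. mopnorm j (\<lambda>v. ?D (X m) v - ?D x v)) \<longlonglongrightarrow> 0"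
    using filterlim_compose[OF Ck_tendsto_hderiv[OF a j \<open>x \<in> U\<close>] X] by (simp add: comp_def)
  then have "\<forall>\<^sub>F m in sequentially. mopnorm j (\<lambda>v. ?D (X m) v - ?D x v) < e / 3"
    using \<open>e > 0\<close> by (intro order_tendstoD(2)) auto
  then show "\<forall>\<^sub>F m in sequentially. mopnorm j (\<lambda>v. ?L (X m) v - ?L x v) < e"
  proof (rule eventually_mono)
    fix m
    assume "mopnorm j (\<lambda>v. ?D (X m) v - ?D x v) < e / 3"
    moreover have "mopnorm j (\<lambda>v. ?L (X m) v - ?L x v) \<le> mopnorm j (\<lambda>v. ?L (X m) v - ?D (X m) v)
        + mopnorm j (\<lambda>v. ?D (X m) v - ?D x v) + mopnorm j (\<lambda>v. ?D x v - ?L x v)"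
      using bm XU \<open>x \<in> U\<close> by (intro mopnorm_triangle3) (auto simp: range_subsetD)
    ultimately show "mopnorm j (\<lambda>v. ?L (X m) v - ?L x v) < e"
      using close[of x] close[of "X m"] by (simp add: mopnorm_diff_commute[of j "?L (X m)"])
  qed
next
  fix e :: real
  assume "e < 0"
  have "0 \<le> mopnorm j (\<lambda>v. lim_deriv j (X m) v - lim_deriv j x v)" for m
    using XU \<open>x \<in> U\<close> j by (auto intro!: mopnorm_nonneg bounded_multilinear_diff bounded_multilinear_lim_deriv)
  with \<open>e < 0\<close> show "\<forall>\<^sub>F m in sequentially. e < mopnorm j (\<lambda>v. lim_deriv j (X m) v - lim_deriv j x v)"
    by (auto intro: always_eventually less_le_trans)
qed

lemma tendsto_mopnorm_lim_deriv:
  assumes "x \<in> U" and "enat j \<le> k"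
  shows "((\<lambda>y. mopnorm j (\<lambda>v. lim_deriv j y v - lim_deriv j x v)) \<longlongrightarrow> 0) (at x)"
proof -
  have "((\<lambda>y. mopnorm j (\<lambda>v. lim_deriv j y v - lim_deriv j x v)) \<longlongrightarrow> 0) (at x within U)"
    unfolding tendsto_at_iff_sequentially comp_def
    using assms by (auto intro!: tendsto_mopnorm_lim_deriv_sequentially simp: filterlim_at)
  then show ?thesis
    using at_within_open[OF \<open>x \<in> U\<close> open_U] by simp
qed

lemma lim_deriv_linearization_approx:
  assumes j: "enat (Suc j) \<le> k" and S: "closed_segment x y \<subseteq> U" and "\<epsilon> > 0"
    and B: "\<And>z. z \<in> closed_segment x y \<Longrightarrow>
      mopnorm (Suc j) (\<lambda>v. lim_deriv (Suc j) z v - lim_deriv (Suc j) x v) \<le> B"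
    and v: "\<forall>i<j. norm (v i) \<le> 1"
  shows "norm (lim_deriv j y v - lim_deriv j x v - lim_deriv (Suc j) x (case_nat (y - x) v))
    \<le> norm (y - x) * (B + 2 * \<epsilon>)"
proof -
  let ?R = "\<lambda>g. g j y v - g j x v - g (Suc j) x (case_nat (y - x) v)"
  have "\<forall>\<^sub>F a in F. norm (?R (\<lambda>j. hderiv j (net a))) \<le> norm (y - x) * (B + 2 * \<epsilon>)"
    using uniform_limit_on_compact_mopnorm[OF compact_segment S j \<open>\<epsilon> > 0\<close>]
  proof (rule eventually_mono, elim conjE)
    fix a
    let ?D = "hderiv (Suc j) (net a)" and ?L = "lim_deriv (Suc j)"
    assume a: "Ck k U (net a)"
      and close: "\<forall>z\<in>closed_segment x y. mopnorm (Suc j) (\<lambda>v. ?D z v - ?L z v) \<le> \<epsilon>"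
    have bm: "bounded_multilinear (Suc j) (?D z)" "bounded_multilinear (Suc j) (?L z)"
      if "z \<in> closed_segment x y" for z
      using that S Ck_bounded_multilinear[OF a j] bounded_multilinear_lim_deriv[OF _ j] by auto
    show "norm (?R (\<lambda>j. hderiv j (net a))) \<le> norm (y - x) * (B + 2 * \<epsilon>)"
    proof (rule hderiv_linearization_bound[OF a open_U j S _ v])
      fix z
      assume z: "z \<in> closed_segment x y"
      have "mopnorm (Suc j) (\<lambda>v. ?D z v - ?D x v) \<le> mopnorm (Suc j) (\<lambda>v. ?D z v - ?L z v)
          + mopnorm (Suc j) (\<lambda>v. ?L z v - ?L x v) + mopnorm (Suc j) (\<lambda>v. ?L x v - ?D x v)"
        using bm[OF z] bm[OF ends_in_segment(1)] by (intro mopnorm_triangle3)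
      moreover have "mopnorm (Suc j) (\<lambda>v. ?L x v - ?D x v) \<le> \<epsilon>"
        by (subst mopnorm_diff_commute) (rule close[rule_format, OF ends_in_segment(1)])
      ultimately show "mopnorm (Suc j) (\<lambda>v. ?D z v - ?D x v) \<le> B + 2 * \<epsilon>"
        using close z B[OF z] by fastforce
    qed
  qed
  moreover have "((\<lambda>a. norm (?R (\<lambda>j. hderiv j (net a)))) \<longlongrightarrow> norm (?R lim_deriv)) F"
    using S j enat_Suc_leD[OF j] by (intro tendsto_intros tendsto_lim_deriv) auto
  ultimately show ?thesis
    using F_proper by (intro tendsto_upperbound) auto
qed

lemma lim_deriv_linearization_bound:
  assumes j: "enat (Suc j) \<le> k" and S: "closed_segment x y \<subseteq> U"
    and B: "\<And>z. z \<in> closed_segment x y \<Longrightarrow>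
      mopnorm (Suc j) (\<lambda>v. lim_deriv (Suc j) z v - lim_deriv (Suc j) x v) \<le> B"
  shows "mopnorm j (\<lambda>v. lim_deriv j y v - lim_deriv j x v - lim_deriv (Suc j) x (case_nat (y - x) v))
    \<le> B * norm (y - x)"
proof (rule mopnorm_le)
  fix v :: "nat \<Rightarrow> 'a"
  assume v: "\<forall>i<j. norm (v i) \<le> 1"
  have "((\<lambda>\<epsilon>. norm (y - x) * (B + 2 * \<epsilon>)) \<longlongrightarrow> norm (y - x) * (B + 2 * 0)) (at_right 0)"
    by (intro tendsto_intros)
  moreover have "\<forall>\<^sub>F \<epsilon> in at_right 0.
      norm (lim_deriv j y v - lim_deriv j x v - lim_deriv (Suc j) x (case_nat (y - x) v))
      \<le> norm (y - x) * (B + 2 * \<epsilon>)"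
    using eventually_at_right_less
    by (rule eventually_mono) (rule lim_deriv_linearization_approx[OF j S _ B v])
  ultimately show "norm (lim_deriv j y v - lim_deriv j x v - lim_deriv (Suc j) x (case_nat (y - x) v))
      \<le> B * norm (y - x)"
    by (simp add: tendsto_lowerbound mult.commute)
qed

lemma tendsto_lim_deriv_remainder:
  assumes j: "enat (Suc j) \<le> k" and "x \<in> U"
  shows "((\<lambda>y. mopnorm j (\<lambda>v. lim_deriv j y v - lim_deriv j x v
      - lim_deriv (Suc j) x (case_nat (y - x) v)) / norm (y - x)) \<longlongrightarrow> 0) (at x)"
  using open_U \<open>x \<in> U\<close> bounded_multilinear_lim_deriv[OF _ enat_Suc_leD[OF j]]
    bounded_multilinear_lim_deriv[OF \<open>x \<in> U\<close> j] tendsto_mopnorm_lim_deriv[OF \<open>x \<in> U\<close> j]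
    lim_deriv_linearization_bound[OF j]
  by (rule tendsto_mopnorm_remainder)

lemma hderiv_lim_fun:
  assumes "enat j \<le> k" and "x \<in> U"
  shows "hderiv j lim_fun x = lim_deriv j x"
  using assms
proof (induction j arbitrary: x)
  case 0
  show ?case
    by (simp add: fun_eq_iff lim_fun_def lim_deriv_def)
next
  case (Suc j)
  show ?case
  proof
    fix v :: "nat \<Rightarrow> 'a"
    let ?w = "\<lambda>i. v (Suc i)"
    have "((\<lambda>y. lim_deriv j y ?w) has_derivative (\<lambda>h. lim_deriv (Suc j) x (case_nat h ?w))) (at x)"
      using Suc.prems open_U bounded_multilinear_lim_deriv[OF _ enat_Suc_leD[OF Suc.prems(1)]]
        bounded_multilinear_lim_deriv tendsto_lim_deriv_remainder
      by (intro has_derivative_of_mopnorm_remainder) auto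
    then have "((\<lambda>y. hderiv j lim_fun y ?w) has_derivative (\<lambda>h. lim_deriv (Suc j) x (case_nat h ?w))) (at x)"
      by (rule has_derivative_transform_within_open[OF _ open_U \<open>x \<in> U\<close>])
        (simp add: Suc.IH[OF enat_Suc_leD[OF Suc.prems(1)]])
    then show "hderiv (Suc j) lim_fun x v = lim_deriv (Suc j) x v"
      by (rule hderiv_Suc_eq)
  qed
qed

lemma Ck_lim_fun: "Ck k U lim_fun"
  unfolding Ck_def
proof (intro conjI allI impI; elim conjE)
  fix j x
  assume j: "enat j \<le> k" and "x \<in> U"
  have "\<forall>\<^sub>F y in at x. mopnorm j (\<lambda>v. lim_deriv j y v - lim_deriv j x v)
      = mopnorm j (\<lambda>v. hderiv j lim_fun y v - hderiv j lim_fun x v)"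
    using eventually_at_in_open'[OF open_U \<open>x \<in> U\<close>]
    by (rule eventually_mono) (simp only: hderiv_lim_fun[OF j] \<open>x \<in> U\<close>)
  from tendsto_cong[THEN iffD1, OF this tendsto_mopnorm_lim_deriv[OF \<open>x \<in> U\<close> j]]
  show "((\<lambda>y. mopnorm j (\<lambda>v. hderiv j lim_fun y v - hderiv j lim_fun x v)) \<longlongrightarrow> 0) (at x)" .
  show "bounded_multilinear j (hderiv j lim_fun x)"
    unfolding hderiv_lim_fun[OF j \<open>x \<in> U\<close>] by (rule bounded_multilinear_lim_deriv[OF \<open>x \<in> U\<close> j])
next
  fix j x
  assume j: "enat (Suc j) \<le> k" and "x \<in> U"
  have "\<forall>\<^sub>F y in at x.
      mopnorm j (\<lambda>v. lim_deriv j y v - lim_deriv j x v - lim_deriv (Suc j) x (case_nat (y - x) v)) / norm (y - x)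
      = mopnorm j (\<lambda>v. hderiv j lim_fun y v - hderiv j lim_fun x v
          - hderiv (Suc j) lim_fun x (case_nat (y - x) v)) / norm (y - x)"
    using eventually_at_in_open'[OF open_U \<open>x \<in> U\<close>]
    by (rule eventually_mono)
      (simp only: hderiv_lim_fun[OF enat_Suc_leD[OF j]] hderiv_lim_fun[OF j] \<open>x \<in> U\<close>)
  from tendsto_cong[THEN iffD1, OF this tendsto_lim_deriv_remainder[OF j \<open>x \<in> U\<close>]]
  show "((\<lambda>y. mopnorm j (\<lambda>v. hderiv j lim_fun y v - hderiv j lim_fun x v
      - hderiv (Suc j) lim_fun x (case_nat (y - x) v)) / norm (y - x)) \<longlongrightarrow> 0) (at x)" .
qed

lemma hderiv_diff_lim_fun:
  assumes "Ck k U (net a)" and "enat j \<le> k" and "x \<in> U"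
  shows "hderiv j (\<lambda>x. net a x - lim_fun x) x = (\<lambda>v. hderiv j (net a) x v - lim_deriv j x v)"
  using hderiv_diff[OF open_U assms(1) Ck_lim_fun assms(2,3)] hderiv_lim_fun[OF assms(2,3)] by auto

lemma abs_mult_norm_diff_lim_deriv_le:
  assumes a: "Ck k U (net a)" and j: "enat j \<le> k" and "x \<in> U" and "0 \<le> e"
    and v: "\<forall>i<j. norm (v i) \<le> 1"
    and cauchy_a: "\<forall>\<^sub>F b in F. Ck k U (net b) \<and> wseminorm U f j (\<lambda>x. net a x - net b x) < ereal e"
  shows "\<bar>f x\<bar> * ereal (norm (hderiv j (net a) x v - lim_deriv j x v)) \<le> ereal e"
proof (rule abs_mult_le_of_tendsto[OF _ F_proper \<open>0 \<le> e\<close>])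
  show "((\<lambda>b. norm (hderiv j (net a) x v - hderiv j (net b) x v))
      \<longlongrightarrow> norm (hderiv j (net a) x v - lim_deriv j x v)) F"
    using \<open>x \<in> U\<close> j by (intro tendsto_intros tendsto_lim_deriv)
  show "\<forall>\<^sub>F b in F. \<bar>f x\<bar> * ereal (norm (hderiv j (net a) x v - hderiv j (net b) x v)) \<le> ereal e"
    using cauchy_a
  proof (rule eventually_mono, elim conjE)
    fix b
    assume "Ck k U (net b)" and "wseminorm U f j (\<lambda>x. net a x - net b x) < ereal e"
    with abs_mult_norm_hderiv_diff_le_wseminorm[OF open_U a _ j \<open>x \<in> U\<close> v, of "net b" f]
    show "\<bar>f x\<bar> * ereal (norm (hderiv j (net a) x v - hderiv j (net b) x v)) \<le> ereal e"
      by simp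
  qed
qed

lemma eventually_wseminorm_diff_lim_fun_le:
  assumes "f \<in> W" and j: "enat j \<le> k" and "e > 0"
  shows "\<forall>\<^sub>F a in F. wseminorm U f j (\<lambda>x. net a x - lim_fun x) \<le> ereal e"
proof -
  obtain P Q where "eventually P F" and "eventually Q F"
    and PQ: "\<And>a b. P a \<Longrightarrow> Q b \<Longrightarrow> Ck k U (net a) \<and> Ck k U (net b) \<and>
      wseminorm U f j (\<lambda>x. net a x - net b x) < ereal e"
    using eventually_cauchy_Ck[OF assms] unfolding eventually_prod_filter by auto
  show ?thesis
    using \<open>eventually P F\<close>
  proof (rule eventually_mono)
    fix a
    assume "P a"
    then have cauchy_a: "\<forall>\<^sub>F b in F. Ck k U (net b) \<and> wseminorm U f j (\<lambda>x. net a x - net b x) < ereal e"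
      using PQ \<open>eventually Q F\<close> by (auto elim: eventually_mono)
    obtain b where "Q b"
      using eventually_happens'[OF F_proper \<open>eventually Q F\<close>] by blast
    with PQ[OF \<open>P a\<close>] have a: "Ck k U (net a)"
      by blast
    show "wseminorm U f j (\<lambda>x. net a x - lim_fun x) \<le> ereal e"
      unfolding wseminorm_def
    proof (rule SUP_least)
      fix x
      assume "x \<in> U"
      have "bounded_multilinear j (\<lambda>v. hderiv j (net a) x v - lim_deriv j x v)"
        using a \<open>x \<in> U\<close> j
        by (intro bounded_multilinear_diff Ck_bounded_multilinear bounded_multilinear_lim_deriv)
      then show "\<bar>f x\<bar> * ereal (mopnorm j (hderiv j (\<lambda>x. net a x - lim_fun x) x)) \<le> ereal e"
        unfolding hderiv_diff_lim_fun[OF a j \<open>x \<in> U\<close>]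
        using abs_mult_norm_diff_lim_deriv_le[OF a j \<open>x \<in> U\<close> _ _ cauchy_a] \<open>e > 0\<close>
        by (simp add: abs_mult_mopnorm_le_iff)
    qed
  qed
qed

lemma wseminorm_lim_fun_finite:
  assumes "f \<in> W" and j: "enat j \<le> k"
  shows "wseminorm U f j lim_fun < \<infinity>"
proof -
  obtain a where "net a \<in> CkW k U W" and close: "wseminorm U f j (\<lambda>x. net a x - lim_fun x) \<le> 1"
    using eventually_happens'[OF F_proper eventually_conj[OF eventually_in_CkW
          eventually_wseminorm_diff_lim_fun_le[OF assms, of 1]]]
    by (auto simp: one_ereal_def)
  then have a: "Ck k U (net a)" and "wseminorm U f j (net a) < \<infinity>"
    using assms unfolding CkW_def by auto
  have "wseminorm U f j lim_fun \<le> wseminorm U f j (net a) + wseminorm U f j (\<lambda>x. net a x - lim_fun x)"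
    using Ck_bounded_multilinear[OF a j] bounded_multilinear_lim_deriv[OF _ j]
      hderiv_lim_fun[OF j] hderiv_diff_lim_fun[OF a j]
    by (intro wseminorm_le_add) auto
  also have "\<dots> < \<infinity>"
    using \<open>wseminorm U f j (net a) < \<infinity>\<close> close by (cases "wseminorm U f j (net a)") auto
  finally show ?thesis .
qed

lemma lim_fun_in_CkW: "lim_fun \<in> CkW k U W"
  unfolding CkW_def using Ck_lim_fun wseminorm_lim_fun_finite by blast

lemma eventually_wseminorm_diff_lim_fun_less:
  assumes "f \<in> W" and "enat j \<le> k" and "e > 0"
  shows "\<forall>\<^sub>F a in F. wseminorm U f j (\<lambda>x. net a x - lim_fun x) < ereal e"
  using eventually_wseminorm_diff_lim_fun_le[OF assms(1,2), of "e / 2"] assms(3)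
  by (auto elim!: eventually_mono intro: order_le_less_trans)

end

theorem mainTheorem13:
  fixes U :: "'a::real_normed_vector set" and k :: enat
    and W :: "('a \<Rightarrow> ereal) set"
  assumes "open U" and "U \<noteq> {}"
    and "\<forall>K. compact K \<and> K \<subseteq> U \<longrightarrow> (\<exists>f\<in>W. (INF x\<in>K. \<bar>f x\<bar>) > 0)"
  shows "\<forall>(net :: 'i \<Rightarrow> 'a \<Rightarrow> 'b::banach) F. CkW_complete k U W net F"
proof (intro allI)
  fix net :: "'i \<Rightarrow> 'a \<Rightarrow> 'b" and F :: "'i filter"
  show "CkW_complete k U W net F"
    unfolding CkW_complete_def
  proof (intro impI, elim conjE)
    assume "F \<noteq> bot" and "\<forall>\<^sub>F i in F. net i \<in> CkW k U W"
      and "\<forall>f\<in>W. \<forall>j. enat j \<le> k \<longrightarrow> (\<forall>e>0. \<forall>\<^sub>F (a, b) in F \<times>\<^sub>F F.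
        wseminorm U f j (\<lambda>x. net a x - net b x) < ereal e)"
    with assms(1,3) interpret CkW_cauchy_net U k W net F
      by unfold_locales
    show "\<exists>g\<in>CkW k U W. \<forall>f\<in>W. \<forall>j. enat j \<le> k \<longrightarrow> (\<forall>e>0. \<forall>\<^sub>F a in F.
        wseminorm U f j (\<lambda>x. net a x - g x) < ereal e)"
      using lim_fun_in_CkW eventually_wseminorm_diff_lim_fun_less by blast
  qed
qed

end
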